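(* The quotient $\boldsymbol{T}[X_1,\ldots,X_n]/\boldsymbol{E}(\boldsymbol{T}^n)_0$ is cancellative, i.e. whenever $x\cdot y=x\cdot z$ in it, either $x=0$ or $y=z$.
   Context: $\boldsymbol{T}=\mathbb{R}\cup\{-\infty\}$ with $a\oplus b=\max\{a,b\}$, $a\odot b=a+b$; its zero is $-\infty$. $\boldsymbol{T}[X_1,\ldots,X_n]$ is the semiring of tropical polynomials in $n$ variables. $\boldsymbol{E}(\boldsymbol{T}^n)_0=\{(f,g)\in\boldsymbol{T}[X_1,\ldots,X_n]^2\mid f(x)=g(x)\ \forall x\in\boldsymbol{T}^n\}$, a congruence; the quotient is the semiring of tropical polynomial functions on $\boldsymbol{T}^n$. *)

theory Defs
  imports "HOL-Library.Extended_Real"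
begin

text \<open>The tropical semifield T = R \<union> {-\<infinity>} is modelled inside ereal (values \<noteq> \<infinity>),
  with tropical addition = max and tropical multiplication = +.
  A tropical polynomial in n variables X_0..X_{n-1} is given by its coefficient function on
  exponent vectors a :: nat \<Rightarrow> nat (coefficient -\<infinity> = monomial absent).\<close>

type_synonym tpoly = "(nat \<Rightarrow> nat) \<Rightarrow> ereal"

definition is_tpoly :: "nat \<Rightarrow> tpoly \<Rightarrow> bool" where
  "is_tpoly n p \<longleftrightarrow> finite {a. p a \<noteq> -\<infinity>} \<and> (\<forall>a. p a \<noteq> \<infinity>)
     \<and> (\<forall>a. p a \<noteq> -\<infinity> \<longrightarrow> (\<forall>i\<ge>n. a i = 0))"

text \<open>Points of T^n (coordinates i < n; further coordinates are irrelevant).\<close>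
definition is_tpoint :: "(nat \<Rightarrow> ereal) \<Rightarrow> bool" where
  "is_tpoint x \<longleftrightarrow> (\<forall>i. x i \<noteq> \<infinity>)"

text \<open>Tropical monomial x^a = sum_i a_i * x_i (with 0 * -\<infinity> = 0, the tropical one).\<close>
definition tmono :: "nat \<Rightarrow> (nat \<Rightarrow> nat) \<Rightarrow> (nat \<Rightarrow> ereal) \<Rightarrow> ereal" where
  "tmono n a x = (\<Sum>i<n. (if a i = 0 then 0 else ereal (real (a i)) * x i))"

definition teval :: "nat \<Rightarrow> tpoly \<Rightarrow> (nat \<Rightarrow> ereal) \<Rightarrow> ereal" where
  "teval n p x = (SUP a \<in> {a. p a \<noteq> -\<infinity>}. p a + tmono n a x)"

definition tzero :: tpoly where
  "tzero = (\<lambda>a. -\<infinity>)"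

definition tmul :: "tpoly \<Rightarrow> tpoly \<Rightarrow> tpoly" where
  "tmul p q = (\<lambda>a. SUP bc \<in> {(b, c). (\<lambda>i. b i + c i) = a}. p (fst bc) + q (snd bc))"

definition E0 :: "nat \<Rightarrow> (tpoly \<times> tpoly) set" where
  "E0 n = {(f, g). is_tpoly n f \<and> is_tpoly n g \<and>
                   (\<forall>x. is_tpoint x \<longrightarrow> teval n f x = teval n g x)}"

end

theory Submission
  imports Defs "HOL-Analysis.Extended_Real_Limits"
begin

text \<open>A nonzero tropical polynomial \<open>f\<close> takes finite values on \<open>\<real>\<^sup>n\<close>, and there
  evaluation turns tropical multiplication into ordinary addition, so \<open>f g = f h\<close> forces
  \<open>g = h\<close> on \<open>\<real>\<^sup>n\<close>. Tropical polynomial functions are continuous on \<open>T\<^sup>n\<close> (finite maxima of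
  continuous monomials), and \<open>\<real>\<^sup>n\<close> is dense in \<open>T\<^sup>n\<close>: replace each coordinate \<open>-\<infinity>\<close> by \<open>-t\<close>
  and let \<open>t \<rightarrow> \<infinity>\<close>. Hence \<open>g = h\<close> on all of \<open>T\<^sup>n\<close>.\<close>

lemma tendsto_sum_ereal_not_PInfty:
  fixes f :: "'i \<Rightarrow> 'a \<Rightarrow> ereal"
  assumes "\<And>i. i \<in> S \<Longrightarrow> (f i \<longlongrightarrow> l i) F" and "\<And>i. i \<in> S \<Longrightarrow> l i \<noteq> \<infinity>"
  shows "((\<lambda>x. \<Sum>i\<in>S. f i x) \<longlongrightarrow> (\<Sum>i\<in>S. l i)) F"
proof (cases "finite S")
  case True
  then show ?thesis using assms
  proof (induction S rule: finite_induct)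
    case (insert j S)
    have "sum l S \<noteq> \<infinity>" using insert.prems(2) by (simp add: sum_Pinfty)
    then show ?case using insert
      by (simp add: tendsto_add_ereal_general)
  qed simp
qed simp

lemma tendsto_SUP_finite:
  fixes f :: "'i \<Rightarrow> 'a \<Rightarrow> 'b :: {complete_linorder, linorder_topology}"
  assumes "finite S" and "\<And>i. i \<in> S \<Longrightarrow> (f i \<longlongrightarrow> l i) F"
  shows "((\<lambda>x. SUP i\<in>S. f i x) \<longlongrightarrow> (SUP i\<in>S. l i)) F"
  using assms by (induction S rule: finite_induct) (auto simp: sup_max intro: tendsto_max)

lemma tmono_not_PInfty:
  assumes "is_tpoint x"
  shows "tmono n a x \<noteq> \<infinity>"
proof -
  have "x i \<noteq> \<infinity>" for i
    using assms unfolding is_tpoint_def by simp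
  then show ?thesis unfolding tmono_def by (simp add: sum_Pinfty)
qed

lemma tmono_real_point: "tmono n a (\<lambda>i. ereal (Y i)) = ereal (\<Sum>i<n. real (a i) * Y i)"
  unfolding tmono_def sum_ereal[symmetric] by (intro sum.cong) (auto simp: zero_ereal_def)

lemma tmono_add:
  assumes "is_tpoint x"
  shows "tmono n (\<lambda>i. b i + c i) x = tmono n b x + tmono n c x"
  unfolding tmono_def sum.distrib[symmetric]
proof (intro sum.cong refl)
  fix i
  have "x i \<noteq> \<infinity>" using assms unfolding is_tpoint_def by simp
  then show "(if b i + c i = 0 then 0 else ereal (real (b i + c i)) * x i) =
      (if b i = 0 then 0 else ereal (real (b i)) * x i) + (if c i = 0 then 0 else ereal (real (c i)) * x i)"
    by (cases "x i") (auto simp: distrib_right)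
qed

lemma tmono_tendsto:
  assumes "is_tpoint x" and "\<And>i. ((\<lambda>t. y t i) \<longlongrightarrow> x i) F"
  shows "((\<lambda>t. tmono n a (y t)) \<longlongrightarrow> tmono n a x) F"
  unfolding tmono_def
proof (intro tendsto_sum_ereal_not_PInfty)
  fix i
  show "((\<lambda>t. if a i = 0 then 0 else ereal (real (a i)) * y t i) \<longlongrightarrow>
      (if a i = 0 then 0 else ereal (real (a i)) * x i)) F"
    using assms(2)[of i] by (auto intro: tendsto_cmult_ereal)
  show "(if a i = 0 then 0 else ereal (real (a i)) * x i) \<noteq> \<infinity>"
    using assms(1) unfolding is_tpoint_def by (cases "x i") auto
qed

lemma teval_upper:
  assumes "is_tpoint x"
  shows "p a + tmono n a x \<le> teval n p x"
proof (cases "p a = -\<infinity>")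
  case True
  then show ?thesis using tmono_not_PInfty[OF assms] by (cases "tmono n a x") simp_all
next
  case False
  then show ?thesis unfolding teval_def by (intro SUP_upper) simp
qed

lemma teval_least:
  assumes "\<And>a. p a \<noteq> -\<infinity> \<Longrightarrow> p a + tmono n a x \<le> c"
  shows "teval n p x \<le> c"
  unfolding teval_def using assms by (intro SUP_least) simp

lemma teval_attained:
  assumes "is_tpoly n p" and "is_tpoint x"
  obtains a where "teval n p x = p a + tmono n a x"
proof (cases "{a. p a \<noteq> -\<infinity>} = {}")
  case True
  then have "teval n p x = -\<infinity>" unfolding teval_def by (simp add: bot_ereal_def)
  moreover have "p undefined + tmono n undefined x = -\<infinity>"
    using True tmono_not_PInfty[OF assms(2)] by (cases "tmono n undefined x") auto
  ultimately show ?thesis by (metis that)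
next
  case False
  let ?S = "(\<lambda>a. p a + tmono n a x) ` {a. p a \<noteq> -\<infinity>}"
  have "finite ?S" using assms(1) unfolding is_tpoly_def by simp
  then have "Sup ?S \<in> ?S" using False by (simp add: cSup_eq_Max)
  then show ?thesis using that unfolding teval_def by blast
qed

lemma teval_not_PInfty:
  assumes "is_tpoly n p" and "is_tpoint x"
  shows "teval n p x \<noteq> \<infinity>"
proof -
  obtain a where "teval n p x = p a + tmono n a x" using teval_attained[OF assms] .
  moreover have "p a \<noteq> \<infinity>" using assms(1) unfolding is_tpoly_def by simp
  ultimately show ?thesis using tmono_not_PInfty[OF assms(2)] by simp
qed

lemma is_tpoint_real_point: "is_tpoint (\<lambda>i. ereal (Y i))"
  unfolding is_tpoint_def by simp

lemma teval_real_point_finite: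
  assumes "is_tpoly n p" and "p \<noteq> tzero"
  shows "\<bar>teval n p (\<lambda>i. ereal (Y i))\<bar> \<noteq> \<infinity>"
proof -
  obtain a where "p a \<noteq> -\<infinity>" using assms(2) unfolding tzero_def by auto
  moreover have "p a \<noteq> \<infinity>" using assms(1) unfolding is_tpoly_def by simp
  moreover have "p a + tmono n a (\<lambda>i. ereal (Y i)) \<le> teval n p (\<lambda>i. ereal (Y i))"
    using is_tpoint_real_point by (rule teval_upper)
  ultimately have "teval n p (\<lambda>i. ereal (Y i)) \<noteq> -\<infinity>"
    by (cases "p a") (auto simp: tmono_real_point)
  then show ?thesis
    using teval_not_PInfty[OF assms(1) is_tpoint_real_point] by auto
qed

lemma teval_tmul_real_point:
  assumes f: "is_tpoly n f" and g: "is_tpoly n g"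
  shows "teval n (tmul f g) (\<lambda>i. ereal (Y i)) =
    teval n f (\<lambda>i. ereal (Y i)) + teval n g (\<lambda>i. ereal (Y i))"
    (is "teval n (tmul f g) ?y = ?F + ?G")
proof (rule antisym)
  have y: "is_tpoint ?y" by (rule is_tpoint_real_point)
  show "teval n (tmul f g) ?y \<le> ?F + ?G"
  proof (rule teval_least)
    fix a :: "nat \<Rightarrow> nat"
    let ?A = "{(b, c). (\<lambda>i. b i + c i) = a}"
    have "(a, \<lambda>_. 0) \<in> ?A" by simp
    then have "?A \<noteq> {}" by (metis empty_iff)
    \<comment> \<open>at a real point \<open>tmono n a ?y \<noteq> -\<infinity>\<close>, so it can be pulled into the supremum\<close>
    then have "tmul f g a + tmono n a ?y = (SUP bc\<in>?A. f (fst bc) + g (snd bc) + tmono n a ?y)"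
      unfolding tmul_def by (intro SUP_ereal_add_left[symmetric]) (auto simp: tmono_real_point)
    also have "\<dots> \<le> ?F + ?G"
    proof (rule SUP_least)
      fix bc assume "bc \<in> ?A"
      then obtain b c where bc: "bc = (b, c)" and a: "a = (\<lambda>i. b i + c i)" by auto
      have "f (fst bc) + g (snd bc) + tmono n a ?y = (f b + tmono n b ?y) + (g c + tmono n c ?y)"
        unfolding bc a tmono_add[OF y] by (simp add: ac_simps)
      also have "\<dots> \<le> ?F + ?G"
        using y by (intro add_mono teval_upper)
      finally show "f (fst bc) + g (snd bc) + tmono n a ?y \<le> ?F + ?G" .
    qed
    finally show "tmul f g a + tmono n a ?y \<le> ?F + ?G" .
  qed
  obtain b where b: "?F = f b + tmono n b ?y" using teval_attained[OF f y] .
  obtain c where c: "?G = g c + tmono n c ?y" using teval_attained[OF g y] .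
  have "?F + ?G = (f b + g c) + tmono n (\<lambda>i. b i + c i) ?y"
    unfolding b c tmono_add[OF y] by (simp add: ac_simps)
  also have "\<dots> \<le> tmul f g (\<lambda>i. b i + c i) + tmono n (\<lambda>i. b i + c i) ?y"
    unfolding tmul_def by (intro add_right_mono SUP_upper2[of "(b, c)"]) auto
  also have "\<dots> \<le> teval n (tmul f g) ?y"
    using y by (rule teval_upper)
  finally show "?F + ?G \<le> teval n (tmul f g) ?y" .
qed

lemma teval_tendsto:
  assumes "is_tpoly n p" and "is_tpoint x" and "\<And>i. ((\<lambda>t. y t i) \<longlongrightarrow> x i) F"
  shows "((\<lambda>t. teval n p (y t)) \<longlongrightarrow> teval n p x) F"
  unfolding teval_def
proof (rule tendsto_SUP_finite)
  show "finite {a. p a \<noteq> -\<infinity>}" using assms(1) unfolding is_tpoly_def by simp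
  fix a assume "a \<in> {a. p a \<noteq> -\<infinity>}"
  then have "\<bar>p a\<bar> \<noteq> \<infinity>" using assms(1) unfolding is_tpoly_def by auto
  then show "((\<lambda>t. p a + tmono n a (y t)) \<longlongrightarrow> p a + tmono n a x) F"
    using tendsto_const tmono_tendsto[OF assms(2,3)] by (rule tendsto_add_ereal_general2)
qed

definition real_approx :: "(nat \<Rightarrow> ereal) \<Rightarrow> real \<Rightarrow> nat \<Rightarrow> real" where
  "real_approx x t i = (if x i = -\<infinity> then -t else real_of_ereal (x i))"

lemma real_approx_tendsto:
  assumes "is_tpoint x"
  shows "((\<lambda>t. ereal (real_approx x t i)) \<longlongrightarrow> x i) at_top"
proof (cases "x i = -\<infinity>")
  case True
  have "((\<lambda>t. ereal (-t)) \<longlongrightarrow> -\<infinity>) at_top"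
    unfolding tendsto_MInfty
  proof
    fix r
    show "\<forall>\<^sub>F t in at_top. ereal (-t) < ereal r"
      using eventually_gt_at_top[of "-r"] by (rule eventually_mono) simp
  qed
  then show ?thesis by (simp add: real_approx_def True)
next
  case False
  then have "x i = ereal (real_of_ereal (x i))"
    using assms unfolding is_tpoint_def by (cases "x i") auto
  then show ?thesis by (simp add: real_approx_def False)
qed

theorem lemma3p1:
  fixes n :: nat and f g h :: tpoly
  assumes "is_tpoly n f" and "is_tpoly n g" and "is_tpoly n h"
    and "(tmul f g, tmul f h) \<in> E0 n"
  shows "(f, tzero) \<in> E0 n \<or> (g, h) \<in> E0 n"
proof (cases "f = tzero")
  case True
  then show ?thesis using assms(1) by (simp add: E0_def)
next
  case False
  have eq_real: "teval n g (\<lambda>i. ereal (Y i)) = teval n h (\<lambda>i. ereal (Y i))" for Y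
  proof -
    have "teval n (tmul f g) (\<lambda>i. ereal (Y i)) = teval n (tmul f h) (\<lambda>i. ereal (Y i))"
      using assms(4) is_tpoint_real_point unfolding E0_def by blast
    then have "teval n f (\<lambda>i. ereal (Y i)) + teval n g (\<lambda>i. ereal (Y i)) =
        teval n f (\<lambda>i. ereal (Y i)) + teval n h (\<lambda>i. ereal (Y i))"
      by (simp add: teval_tmul_real_point assms(1-3))
    with teval_real_point_finite[OF assms(1) False, of Y] show ?thesis
      by (auto simp: ereal_add_cancel_left)
  qed
  have "teval n g x = teval n h x" if x: "is_tpoint x" for x
  proof (rule tendsto_unique[OF trivial_limit_at_top_linorder])
    show "((\<lambda>t. teval n g (\<lambda>i. ereal (real_approx x t i))) \<longlongrightarrow> teval n g x) at_top"
      using assms(2) x real_approx_tendsto[OF x] by (rule teval_tendsto)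
    show "((\<lambda>t. teval n g (\<lambda>i. ereal (real_approx x t i))) \<longlongrightarrow> teval n h x) at_top"
      unfolding eq_real using assms(3) x real_approx_tendsto[OF x] by (rule teval_tendsto)
  qed
  then show ?thesis using assms(2,3) unfolding E0_def by simp
qed

end
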